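(* If $M$ is a compact piecewise linear $2$-manifold in $\mathbb{R}^3$, then there exists $N\in\mathbb{N}$ such that $\mathrm{Lip}((M,d_K),\mathbb{R}^N)<\infty$.
   Context: The Korányi metric on $\mathbb{R}^3$ is $d_K(p,q)=\big(((x-x')^2+(y-y')^2)^2+16(z-z'+\tfrac12(xy'-x'y))^2\big)^{1/4}$ for $p=(x,y,z)$, $q=(x',y',z')$. A map $f:(X,d_X)\to(Y,d_Y)$ is $L$-bi-Lipschitz if $L^{-1}d_X(a,b)\le d_Y(f(a),f(b))\le L d_X(a,b)$ for all $a,b$; $\mathrm{Lip}(X,Y)$ is the infimum of such $L$ over all maps $X\to Y$ ($\infty$ if no bi-Lipschitz map exists). $\mathbb{R}^N$ carries the Euclidean metric. *)

theory Defs
  imports "HOL-Analysis.Analysis"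
begin

definition koranyi :: "real^3 \<Rightarrow> real^3 \<Rightarrow> real" where
  "koranyi p q = root 4 (((p$1 - q$1)^2 + (p$2 - q$2)^2)^2
      + 16 * (p$3 - q$3 + (1/2) * (p$1 * q$2 - q$1 * p$2))^2)"

text \<open>Euclidean distance on R^N, points of R^N represented by their first N coordinates.\<close>
definition eucl_dist :: "nat \<Rightarrow> (nat \<Rightarrow> real) \<Rightarrow> (nat \<Rightarrow> real) \<Rightarrow> real" where
  "eucl_dist N u v = sqrt (\<Sum>i<N. (u i - v i)^2)"

definition bi_lipschitz_on ::
  "real \<Rightarrow> 'a set \<Rightarrow> ('a \<Rightarrow> 'a \<Rightarrow> real) \<Rightarrow> ('b \<Rightarrow> 'b \<Rightarrow> real) \<Rightarrow> ('a \<Rightarrow> 'b) \<Rightarrow> bool" where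
  "bi_lipschitz_on L S dX dY f \<longleftrightarrow> 0 < L \<and>
     (\<forall>a\<in>S. \<forall>b\<in>S. dX a b / L \<le> dY (f a) (f b) \<and> dY (f a) (f b) \<le> L * dX a b)"

definition topological_2_manifold :: "(real^3) set \<Rightarrow> bool" where
  "topological_2_manifold M \<longleftrightarrow>
     (\<forall>x\<in>M. \<exists>U. openin (top_of_set M) U \<and> x \<in> U \<and>
        (\<exists>V :: (real^2) set. open V \<and> U homeomorphic V))"

definition pl_2_manifold :: "(real^3) set \<Rightarrow> bool" where
  "pl_2_manifold M \<longleftrightarrow> topological_2_manifold M \<and>
     (\<exists>\<T>. triangulation \<T> \<and> \<Union>\<T> = M)"

end

theory Submission
  imports Defs
begin

text \<open>The Koranyi distance is comparable to \<open>sqrt (horizontal distance) + sqrt \<bar>height difference\<bar>\<close>.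
  On a vertical plane this is a line times the snowflaked line \<open>(\<real>, sqrt \<bar>s - t\<bar>)\<close>, which
  embeds bi-Lipschitz into \<open>\<real>\<^sup>2\<^sup>0\<close> by Assouad's lacunary Fourier series. On a non-vertical
  plane, centred at its characteristic point, the height difference is half the cross product
  of the horizontal positions; on each of four sectors \<open>\<bar>Q\<bar> \<le> P\<close> the map
  \<open>(P, Q) \<mapsto> (P, Q, P * snowflake (Q / 2P))\<close> embeds this metric. A compact PL surface is a
  finite union of triangles, each lying in a plane because it has empty interior in \<open>\<real>\<^sup>3\<close>;
  embeddability passes to finite unions by extending both embeddings coordinatewise (McShane)
  and adding the difference of the distances to the two pieces as one more coordinate.\<close>

section \<open>The Koranyi gauge\<close>

definition horiz_sqdist :: "real^3 \<Rightarrow> real^3 \<Rightarrow> real" where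
  "horiz_sqdist p q = (p$1 - q$1)^2 + (p$2 - q$2)^2"

text \<open>The vertical coordinate of \<open>q\<^sup>-\<^sup>1 p\<close> in the Heisenberg group.\<close>
definition height_diff :: "real^3 \<Rightarrow> real^3 \<Rightarrow> real" where
  "height_diff p q = p$3 - q$3 + (1/2) * (p$1 * q$2 - q$1 * p$2)"

definition koranyi_gauge :: "real^3 \<Rightarrow> real^3 \<Rightarrow> complex" where
  "koranyi_gauge p q = Complex (horiz_sqdist p q) (4 * height_diff p q)"

lemma root4_eq_sqrt_sqrt: "root 4 x = sqrt (sqrt x)"
  by (metis num_double numeral_times_numeral real_root_mult_exp sqrt_def)

lemma koranyi_eq_sqrt_norm_gauge: "koranyi p q = sqrt (cmod (koranyi_gauge p q))"
proof -
  have "koranyi p q = root 4 ((horiz_sqdist p q)^2 + (4 * height_diff p q)^2)"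
    by (simp add: koranyi_def horiz_sqdist_def height_diff_def power2_eq_square algebra_simps)
  then show ?thesis by (simp add: root4_eq_sqrt_sqrt koranyi_gauge_def cmod_def)
qed

lemma koranyi_nonneg: "0 \<le> koranyi p q"
  by (simp add: koranyi_eq_sqrt_norm_gauge)

lemma koranyi_commute: "koranyi p q = koranyi q p"
  unfolding koranyi_def by (simp add: algebra_simps power2_commute)

lemma koranyi_self: "koranyi p p = 0"
  by (simp add: koranyi_def)

lemma horiz_sqdist_nonneg: "0 \<le> horiz_sqdist p q"
  by (simp add: horiz_sqdist_def)

lemma koranyi_gauge_cocycle:
  "koranyi_gauge p r = koranyi_gauge p q + koranyi_gauge q r + 2 * Complex
     ((p$1 - q$1) * (q$1 - r$1) + (p$2 - q$2) * (q$2 - r$2))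
     ((p$2 - q$2) * (q$1 - r$1) - (p$1 - q$1) * (q$2 - r$2))"
  by (simp add: complex_eq_iff koranyi_gauge_def horiz_sqdist_def height_diff_def
      algebra_simps power2_eq_square)

text \<open>The correction term of the cocycle identity has modulus
  \<open>sqrt (horiz_sqdist p q) * sqrt (horiz_sqdist q r) \<le> koranyi p q * koranyi q r\<close>,
  hence \<open>cmod (koranyi_gauge p r) \<le> (koranyi p q + koranyi q r)\<^sup>2\<close>.\<close>
lemma koranyi_triangle: "koranyi p r \<le> koranyi p q + koranyi q r"
proof -
  define a1 a2 b1 b2 where "a1 = p$1 - q$1" "a2 = p$2 - q$2" "b1 = q$1 - r$1" "b2 = q$2 - r$2"
  define W where "W = Complex (a1 * b1 + a2 * b2) (a2 * b1 - a1 * b2)"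
  have gauge: "koranyi_gauge p r = koranyi_gauge p q + koranyi_gauge q r + 2 * W"
    using koranyi_gauge_cocycle[of p r q] by (simp add: W_def a1_a2_b1_b2_def)
  have "(cmod W)^2 = (a1 * b1 + a2 * b2)^2 + (a2 * b1 - a1 * b2)^2"
    unfolding W_def cmod_def by simp
  also have "\<dots> = (a1^2 + a2^2) * (b1^2 + b2^2)"
    by (simp add: power2_eq_square algebra_simps)
  finally have "(cmod W)^2 = (a1^2 + a2^2) * (b1^2 + b2^2)" .
  then have W_eq: "cmod W = sqrt (a1^2 + a2^2) * sqrt (b1^2 + b2^2)"
    by (metis norm_ge_zero real_sqrt_mult real_sqrt_unique)
  have "a1^2 + a2^2 \<le> cmod (koranyi_gauge p q)" "b1^2 + b2^2 \<le> cmod (koranyi_gauge q r)"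
    using abs_Re_le_cmod[of "koranyi_gauge p q"] abs_Re_le_cmod[of "koranyi_gauge q r"]
    by (simp_all add: koranyi_gauge_def horiz_sqdist_def a1_a2_b1_b2_def)
  then have W_le: "cmod W \<le> sqrt (cmod (koranyi_gauge p q)) * sqrt (cmod (koranyi_gauge q r))"
    unfolding W_eq by (intro mult_mono real_sqrt_le_mono) auto
  have "cmod (koranyi_gauge p r) \<le> cmod (koranyi_gauge p q) + cmod (koranyi_gauge q r) + 2 * cmod W"
    unfolding gauge by (metis norm_triangle_le norm_triangle_ineq add_mono order_refl
        norm_mult norm_numeral)
  also have "\<dots> \<le> (sqrt (cmod (koranyi_gauge p q)) + sqrt (cmod (koranyi_gauge q r)))^2"
    using W_le by (simp add: power2_sum)
  finally show ?thesis
    unfolding koranyi_eq_sqrt_norm_gauge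
    by (metis add_nonneg_nonneg real_sqrt_ge_zero real_le_lsqrt norm_ge_zero)
qed

lemma root4_sum_pow4_bounds:
  fixes a b :: real
  assumes "0 \<le> a" "0 \<le> b"
  shows "(a + b) / 2 \<le> root 4 (a^4 + b^4)" "root 4 (a^4 + b^4) \<le> a + b"
proof -
  have "a^4 + b^4 \<le> (a + b)^4"
    using assms by (simp add: power4_eq_xxxx algebra_simps)
  then show "root 4 (a^4 + b^4) \<le> a + b"
    using assms by (metis add_nonneg_nonneg real_root_le_iff real_root_power_cancel zero_less_numeral)
  have "((a + b) / 2)^4 \<le> (max a b)^4"
    using assms by (intro power_mono) auto
  also have "\<dots> \<le> a^4 + b^4"
    using assms by (simp add: max_def)
  finally show "(a + b) / 2 \<le> root 4 (a^4 + b^4)"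
    using assms by (metis add_nonneg_nonneg divide_nonneg_pos real_root_le_iff
        real_root_power_cancel zero_less_numeral zero_less_two)
qed

lemma koranyi_eq_root4:
  "koranyi p q = root 4 (sqrt (horiz_sqdist p q) ^ 4 + (2 * sqrt \<bar>height_diff p q\<bar>) ^ 4)"
proof -
  have "sqrt (horiz_sqdist p q) ^ 4 = (horiz_sqdist p q)^2"
    using horiz_sqdist_nonneg[of p q]
    by (metis power2_eq_square power4_eq_xxxx real_sqrt_pow2 mult.assoc)
  moreover have "(2 * sqrt \<bar>height_diff p q\<bar>) ^ 4 = 16 * (height_diff p q)^2"
    by (simp add: power_mult_distrib power4_eq_xxxx)
      (metis abs_mult_self_eq mult.assoc power2_eq_square)
  ultimately show ?thesis
    by (simp add: koranyi_def horiz_sqdist_def height_diff_def)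
qed

lemma koranyi_le_horiz_plus_height:
  "koranyi p q \<le> sqrt (horiz_sqdist p q) + 2 * sqrt \<bar>height_diff p q\<bar>"
  unfolding koranyi_eq_root4 by (rule root4_sum_pow4_bounds) (auto simp: horiz_sqdist_nonneg)

lemma horiz_plus_height_le_koranyi:
  "(sqrt (horiz_sqdist p q) + 2 * sqrt \<bar>height_diff p q\<bar>) / 2 \<le> koranyi p q"
  unfolding koranyi_eq_root4 by (rule root4_sum_pow4_bounds) (auto simp: horiz_sqdist_nonneg)

section \<open>Bi-Lipschitz embeddability into Euclidean space\<close>

definition eucl_embeddable :: "('a \<Rightarrow> 'a \<Rightarrow> real) \<Rightarrow> 'a set \<Rightarrow> bool" where
  "eucl_embeddable d X \<longleftrightarrow> (\<exists>N f L. bi_lipschitz_on L X d (eucl_dist N) f)"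

lemma eucl_dist_eq_L2_set: "eucl_dist N u v = L2_set (\<lambda>i. u i - v i) {..<N}"
  by (simp add: eucl_dist_def L2_set_def)

lemma eucl_dist_nonneg: "0 \<le> eucl_dist N u v"
  by (simp add: eucl_dist_eq_L2_set)

lemma eucl_dist_commute: "eucl_dist N u v = eucl_dist N v u"
  by (simp add: eucl_dist_def power2_commute)

lemma eucl_dist_triangle: "eucl_dist N u w \<le> eucl_dist N u v + eucl_dist N v w"
  unfolding eucl_dist_eq_L2_set
  using L2_set_triangle_ineq[of "\<lambda>i. u i - v i" "\<lambda>i. v i - w i" "{..<N}"] by simp

lemma eucl_dist_cong:
  "(\<And>i. i < N \<Longrightarrow> u i = u' i \<and> v i = v' i) \<Longrightarrow> eucl_dist N u v = eucl_dist N u' v'"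
  unfolding eucl_dist_def by (intro arg_cong[where f=sqrt] sum.cong) auto

lemma abs_diff_le_eucl_dist: "i < N \<Longrightarrow> \<bar>u i - v i\<bar> \<le> eucl_dist N u v"
  unfolding eucl_dist_def
  by (rule real_le_rsqrt) (auto intro: member_le_sum[where f="\<lambda>i. (u i - v i)^2"])

lemma eucl_dist_le_coordwise:
  assumes "\<And>i. i < N \<Longrightarrow> \<bar>u i - v i\<bar> \<le> B" "0 \<le> B"
  shows "eucl_dist N u v \<le> sqrt (real N) * B"
proof -
  have "(\<Sum>i<N. (u i - v i)^2) \<le> (\<Sum>i<N. B^2)"
    by (intro sum_mono) (metis abs_ge_zero assms(1) lessThan_iff power_mono power2_abs)
  then have "sqrt (\<Sum>i<N. (u i - v i)^2) \<le> sqrt (real N * B^2)"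
    by (intro real_sqrt_le_mono) simp
  also have "\<dots> = sqrt (real N) * B"
    using assms(2) by (simp add: real_sqrt_mult)
  finally show ?thesis unfolding eucl_dist_def .
qed

definition append_coords :: "nat \<Rightarrow> (nat \<Rightarrow> real) \<Rightarrow> (nat \<Rightarrow> real) \<Rightarrow> nat \<Rightarrow> real" where
  "append_coords n u v i = (if i < n then u i else v (i - n))"

lemma eucl_dist_append_coords:
  "eucl_dist (n + m) (append_coords n u v) (append_coords n u' v') =
     sqrt ((eucl_dist n u u')^2 + (eucl_dist m v v')^2)"
proof -
  have split: "(\<Sum>i<n + m. f i) = (\<Sum>i<n. f i) + (\<Sum>i<m. f (n + i))" for f :: "nat \<Rightarrow> real"
    by (induction m) auto
  have "(\<Sum>i<n + m. (append_coords n u v i - append_coords n u' v' i)^2) =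
        (\<Sum>i<n. (u i - u' i)^2) + (\<Sum>i<m. (v i - v' i)^2)"
    unfolding split by (simp add: append_coords_def)
  then show ?thesis
    unfolding eucl_dist_def by (simp add: sum_nonneg)
qed

lemma eucl_dist_append_coords_bounds:
  fixes n m :: nat and u v u' v' :: "nat \<Rightarrow> real"
  defines "E \<equiv> eucl_dist (n + m) (append_coords n u v) (append_coords n u' v')"
  shows "eucl_dist n u u' \<le> E" "eucl_dist m v v' \<le> E"
    and "E \<le> eucl_dist n u u' + eucl_dist m v v'"
  unfolding E_def eucl_dist_append_coords
  by (simp_all add: sqrt_sum_squares_le_sum eucl_dist_nonneg)

lemma eucl_dist_1: "eucl_dist 1 (\<lambda>_. a) (\<lambda>_. b) = \<bar>a - b\<bar>"
  by (simp add: eucl_dist_def)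

definition glue_map ::
  "nat \<Rightarrow> nat \<Rightarrow> ('a \<Rightarrow> nat \<Rightarrow> real) \<Rightarrow> ('a \<Rightarrow> nat \<Rightarrow> real) \<Rightarrow> ('a \<Rightarrow> real) \<Rightarrow> 'a \<Rightarrow> nat \<Rightarrow> real"
  where "glue_map m n F G \<psi> p = append_coords m (F p) (append_coords n (G p) (\<lambda>_. \<psi> p))"

lemma eucl_dist_glue_map_bounds:
  fixes m n :: nat and F G :: "'a \<Rightarrow> nat \<Rightarrow> real" and \<psi> :: "'a \<Rightarrow> real"
  defines "E \<equiv> \<lambda>p q. eucl_dist (m + (n + 1)) (glue_map m n F G \<psi> p) (glue_map m n F G \<psi> q)"
  shows "eucl_dist m (F p) (F q) \<le> E p q" "eucl_dist n (G p) (G q) \<le> E p q" "\<bar>\<psi> p - \<psi> q\<bar> \<le> E p q"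
    and "E p q \<le> eucl_dist m (F p) (F q) + eucl_dist n (G p) (G q) + \<bar>\<psi> p - \<psi> q\<bar>"
  using eucl_dist_append_coords_bounds[where n=m and m="n + 1" and u="F p" and u'="F q"
      and v="append_coords n (G p) (\<lambda>_. \<psi> p)" and v'="append_coords n (G q) (\<lambda>_. \<psi> q)"]
    eucl_dist_append_coords_bounds[where n=n and m=1 and u="G p" and u'="G q"
      and v="\<lambda>_. \<psi> p" and v'="\<lambda>_. \<psi> q"]
  unfolding E_def glue_map_def eucl_dist_1 by linarith+

lemma eucl_embeddableI:
  assumes "0 < c"
    and "\<And>a b. a \<in> X \<Longrightarrow> b \<in> X \<Longrightarrow> c * d a b \<le> eucl_dist N (f a) (f b)"
    and "\<And>a b. a \<in> X \<Longrightarrow> b \<in> X \<Longrightarrow> eucl_dist N (f a) (f b) \<le> C * d a b"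
    and "\<And>a b. a \<in> X \<Longrightarrow> b \<in> X \<Longrightarrow> 0 \<le> d a b"
  shows "eucl_embeddable d X"
proof -
  define L where "L = max (max C 1) (1/c)"
  have L: "0 < L" "C \<le> L" "1/c \<le> L"
    unfolding L_def by auto
  then have "1 / L \<le> c"
    using assms(1) by (simp add: divide_le_eq mult.commute)
  have "bi_lipschitz_on L X d (eucl_dist N) f"
    unfolding bi_lipschitz_on_def
  proof (intro conjI ballI)
    fix a b assume ab: "a \<in> X" "b \<in> X"
    have "d a b / L = (1 / L) * d a b"
      by simp
    also have "\<dots> \<le> c * d a b"
      using \<open>1 / L \<le> c\<close> assms(4)[OF ab] by (rule mult_right_mono)
    finally show "d a b / L \<le> eucl_dist N (f a) (f b)"
      using assms(2)[OF ab] by linarith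
    have "C * d a b \<le> L * d a b"
      using L(2) assms(4)[OF ab] by (rule mult_right_mono)
    then show "eucl_dist N (f a) (f b) \<le> L * d a b"
      using assms(3)[OF ab] by linarith
  qed (use L in auto)
  then show ?thesis
    unfolding eucl_embeddable_def by blast
qed

lemma eucl_embeddableE:
  assumes "eucl_embeddable d X"
  obtains N f c C where "0 < c" "0 < C"
    "\<And>a b. a \<in> X \<Longrightarrow> b \<in> X \<Longrightarrow> c * d a b \<le> eucl_dist N (f a) (f b)"
    "\<And>a b. a \<in> X \<Longrightarrow> b \<in> X \<Longrightarrow> eucl_dist N (f a) (f b) \<le> C * d a b"
proof -
  obtain N f L where "bi_lipschitz_on L X d (eucl_dist N) f"
    using assms unfolding eucl_embeddable_def by blast
  then show thesis
    by (intro that[of "1/L" L N f]) (auto simp: bi_lipschitz_on_def)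
qed

lemma eucl_embeddable_pullback:
  assumes "eucl_embeddable e Y" "\<phi> ` X \<subseteq> Y" "0 < c"
    and "\<And>a b. a \<in> X \<Longrightarrow> b \<in> X \<Longrightarrow> c * d a b \<le> e (\<phi> a) (\<phi> b)"
    and "\<And>a b. a \<in> X \<Longrightarrow> b \<in> X \<Longrightarrow> e (\<phi> a) (\<phi> b) \<le> C * d a b"
    and "\<And>a b. a \<in> X \<Longrightarrow> b \<in> X \<Longrightarrow> 0 \<le> d a b"
  shows "eucl_embeddable d X"
proof -
  obtain N f c' C' where c': "0 < c'" "0 < C'"
    and lower: "\<And>a b. a \<in> Y \<Longrightarrow> b \<in> Y \<Longrightarrow> c' * e a b \<le> eucl_dist N (f a) (f b)"
    and upper: "\<And>a b. a \<in> Y \<Longrightarrow> b \<in> Y \<Longrightarrow> eucl_dist N (f a) (f b) \<le> C' * e a b"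
    using eucl_embeddableE[OF assms(1)] by metis
  show ?thesis
  proof (rule eucl_embeddableI[where c="c' * c" and C="C' * C" and f="f \<circ> \<phi>" and N=N])
    fix a b assume ab: "a \<in> X" "b \<in> X"
    then have Y: "\<phi> a \<in> Y" "\<phi> b \<in> Y"
      using assms(2) by auto
    have "c' * (c * d a b) \<le> c' * e (\<phi> a) (\<phi> b)"
      using assms(4)[OF ab] c' by simp
    moreover have "C' * e (\<phi> a) (\<phi> b) \<le> C' * (C * d a b)"
      using assms(5)[OF ab] c' by simp
    ultimately show "c' * c * d a b \<le> eucl_dist N ((f \<circ> \<phi>) a) ((f \<circ> \<phi>) b)"
      and "eucl_dist N ((f \<circ> \<phi>) a) ((f \<circ> \<phi>) b) \<le> C' * C * d a b"
      using lower[OF Y] upper[OF Y] by (simp_all add: mult.assoc)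
  qed (use assms c' in auto)
qed

lemma eucl_embeddable_subset: "eucl_embeddable d Y \<Longrightarrow> X \<subseteq> Y \<Longrightarrow> eucl_embeddable d X"
  unfolding eucl_embeddable_def bi_lipschitz_on_def by blast

lemma eucl_embeddable_empty: "eucl_embeddable d {}"
  unfolding eucl_embeddable_def bi_lipschitz_on_def by (rule exI[of _ 0], rule exI, rule exI[of _ 1]) simp

section \<open>Lipschitz extension and finite unions\<close>

locale pseudometric =
  fixes d :: "'a \<Rightarrow> 'a \<Rightarrow> real"
  assumes commute: "d x y = d y x"
    and triangle: "d x z \<le> d x y + d y z"
    and nonneg: "0 \<le> d x y"
    and self: "d x x = 0"

definition mcshane_ext :: "('a \<Rightarrow> 'a \<Rightarrow> real) \<Rightarrow> real \<Rightarrow> ('a \<Rightarrow> real) \<Rightarrow> 'a set \<Rightarrow> 'a \<Rightarrow> real"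
  where "mcshane_ext d L g A p = Inf ((\<lambda>a. g a + L * d p a) ` A)"

definition dist_to_set :: "('a \<Rightarrow> 'a \<Rightarrow> real) \<Rightarrow> 'a set \<Rightarrow> 'a \<Rightarrow> real"
  where "dist_to_set d A p = Inf (d p ` A)"

context pseudometric
begin

lemma bdd_below_mcshane_image:
  assumes "a0 \<in> A" "0 \<le> L" "\<And>a b. a \<in> A \<Longrightarrow> b \<in> A \<Longrightarrow> g a \<le> g b + L * d a b"
  shows "bdd_below ((\<lambda>a. g a + L * d p a) ` A)"
proof (rule bdd_belowI2)
  fix a assume a: "a \<in> A"
  have "L * d a0 a \<le> L * d a0 p + L * d p a"
    using triangle[of a0 a p] assms(2) by (metis distrib_left mult_left_mono)
  then show "g a0 - L * d a0 p \<le> g a + L * d p a"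
    using assms(3)[OF assms(1) a] by linarith
qed

lemma mcshane_ext_eq:
  assumes "a \<in> A" "0 \<le> L" "\<And>a b. a \<in> A \<Longrightarrow> b \<in> A \<Longrightarrow> g a \<le> g b + L * d a b"
  shows "mcshane_ext d L g A a = g a"
proof (rule antisym)
  show "mcshane_ext d L g A a \<le> g a"
    unfolding mcshane_ext_def
    using cInf_lower[OF imageI[OF assms(1)] bdd_below_mcshane_image[OF assms, where p=a]]
    by (simp add: self)
  show "g a \<le> mcshane_ext d L g A a"
    unfolding mcshane_ext_def using assms by (auto intro!: cInf_greatest)
qed

lemma mcshane_ext_lipschitz:
  assumes "A \<noteq> {}" "0 \<le> L" "\<And>a b. a \<in> A \<Longrightarrow> b \<in> A \<Longrightarrow> g a \<le> g b + L * d a b"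
  shows "\<bar>mcshane_ext d L g A p - mcshane_ext d L g A q\<bar> \<le> L * d p q"
proof -
  have one_side: "mcshane_ext d L g A p \<le> mcshane_ext d L g A q + L * d p q" for p q
  proof -
    have "mcshane_ext d L g A p - L * d p q \<le> mcshane_ext d L g A q"
      unfolding mcshane_ext_def
    proof (rule cInf_greatest)
      fix x assume "x \<in> (\<lambda>a. g a + L * d q a) ` A"
      then obtain a where a: "a \<in> A" and x: "x = g a + L * d q a"
        by blast
      have "Inf ((\<lambda>a. g a + L * d p a) ` A) \<le> g a + L * d p a"
        using cInf_lower[OF imageI[OF a] bdd_below_mcshane_image[OF a assms(2,3)]] .
      moreover have "L * d p a \<le> L * d p q + L * d q a"
        using triangle[of p a q] assms(2) by (metis distrib_left mult_left_mono)
      ultimately show "Inf ((\<lambda>a. g a + L * d p a) ` A) - L * d p q \<le> x"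
        using x by linarith
    qed (use assms(1) in blast)
    then show ?thesis
      by linarith
  qed
  show ?thesis
    using one_side[of p q] one_side[of q p] by (simp add: commute abs_le_iff)
qed

lemma dist_to_set_eq_mcshane_ext: "dist_to_set d A = mcshane_ext d 1 (\<lambda>_. 0) A"
  by (simp add: fun_eq_iff dist_to_set_def mcshane_ext_def)

lemma dist_to_set_eq_0: "a \<in> A \<Longrightarrow> dist_to_set d A a = 0"
  unfolding dist_to_set_eq_mcshane_ext by (rule mcshane_ext_eq) (auto simp: nonneg)

lemma dist_to_set_lipschitz:
  "A \<noteq> {} \<Longrightarrow> \<bar>dist_to_set d A p - dist_to_set d A q\<bar> \<le> d p q"
  unfolding dist_to_set_eq_mcshane_ext
  using mcshane_ext_lipschitz[of A 1 "\<lambda>_. 0"] by (simp add: nonneg)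

lemma dist_to_set_nonneg: "A \<noteq> {} \<Longrightarrow> 0 \<le> dist_to_set d A p"
  unfolding dist_to_set_def by (auto intro!: cInf_greatest nonneg)

lemma eucl_embeddable_extensionE:
  assumes "eucl_embeddable d A" "A \<noteq> {}"
  obtains N F c K where "0 < c" "0 \<le> K"
    "\<And>a b. a \<in> A \<Longrightarrow> b \<in> A \<Longrightarrow> c * d a b \<le> eucl_dist N (F a) (F b)"
    "\<And>p q. eucl_dist N (F p) (F q) \<le> K * d p q"
proof -
  obtain N f c C where "0 < c" "0 < C"
    and lower: "\<And>a b. a \<in> A \<Longrightarrow> b \<in> A \<Longrightarrow> c * d a b \<le> eucl_dist N (f a) (f b)"
    and upper: "\<And>a b. a \<in> A \<Longrightarrow> b \<in> A \<Longrightarrow> eucl_dist N (f a) (f b) \<le> C * d a b"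
    using eucl_embeddableE[OF assms(1)] by metis
  define F where "F p i = mcshane_ext d C (\<lambda>a. f a i) A p" for p i
  have lip: "f a i \<le> f b i + C * d a b" if "a \<in> A" "b \<in> A" "i < N" for a b i
    using abs_diff_le_eucl_dist[OF that(3), of "f a" "f b"] upper[OF that(1,2)] by linarith
  show thesis
  proof (rule that[of c "sqrt (real N) * C" N F])
    show "c * d a b \<le> eucl_dist N (F a) (F b)" if "a \<in> A" "b \<in> A" for a b
      using lower[OF that] eucl_dist_cong[of N "F a" "f a" "F b" "f b"] that lip \<open>0 < C\<close>
      unfolding F_def by (simp add: mcshane_ext_eq)
    show "eucl_dist N (F p) (F q) \<le> sqrt (real N) * C * d p q" for p q
      using eucl_dist_le_coordwise[of N "F p" "F q" "C * d p q"] assms(2) \<open>0 < C\<close> lip nonneg[of p q]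
      unfolding F_def by (simp add: mcshane_ext_lipschitz mult.assoc)
  qed (use \<open>0 < c\<close> \<open>0 < C\<close> in auto)
qed

text \<open>A point \<open>p\<close> near \<open>B\<close> is separated from \<open>q \<in> B\<close> by an embedding of \<open>B\<close>
  extended Lipschitz to the whole space; a point far from \<open>B\<close> by its distance to \<open>B\<close>.\<close>
lemma separation_by_extension:
  assumes "0 < c" "0 \<le> K" "q \<in> B"
    and G_lip: "\<And>p q. eucl_dist N (G p) (G q) \<le> K * d p q"
    and G_lower: "\<And>a b. a \<in> B \<Longrightarrow> b \<in> B \<Longrightarrow> c * d a b \<le> eucl_dist N (G a) (G b)"
  shows "c * d p q \<le> (c + K) * dist_to_set d B p + eucl_dist N (G p) (G q)"
proof -
  have "(c * d p q - eucl_dist N (G p) (G q)) / (c + K) \<le> dist_to_set d B p"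
    unfolding dist_to_set_def
  proof (rule cInf_greatest)
    fix x assume "x \<in> d p ` B"
    then obtain b where b: "b \<in> B" and x: "x = d p b"
      by blast
    have "c * d p q \<le> c * d p b + c * d b q"
      using triangle[of p q b] assms(1) by (metis distrib_left mult_left_mono less_imp_le)
    moreover have "c * d b q \<le> eucl_dist N (G b) (G p) + eucl_dist N (G p) (G q)"
      using G_lower[OF b assms(3)] eucl_dist_triangle[of N "G b" "G q" "G p"] by linarith
    moreover have "eucl_dist N (G b) (G p) \<le> K * d p b"
      using G_lip[of b p] by (simp add: commute)
    ultimately have "c * d p q - eucl_dist N (G p) (G q) \<le> (c + K) * d p b"
      by (simp add: distrib_right)
    then show "(c * d p q - eucl_dist N (G p) (G q)) / (c + K) \<le> x"
      using assms(1,2) x by (simp add: divide_le_eq mult.commute)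
  qed (use assms(3) in blast)
  then show ?thesis
    using assms(1,2) by (simp add: divide_le_eq mult.commute)
qed

lemma glue_map_lower_across:
  fixes m n :: nat and F G :: "'a \<Rightarrow> nat \<Rightarrow> real"
  assumes "A \<noteq> {}" "p \<in> A" "q \<in> B" "0 < c" "0 \<le> K"
    and G_lip: "\<And>p q. eucl_dist n (G p) (G q) \<le> K * d p q"
    and G_lower: "\<And>a b. a \<in> B \<Longrightarrow> b \<in> B \<Longrightarrow> c * d a b \<le> eucl_dist n (G a) (G b)"
  defines "H \<equiv> glue_map m n F G (\<lambda>x. dist_to_set d A x - dist_to_set d B x)"
  shows "c * d p q \<le> (c + K + 1) * eucl_dist (m + (n + 1)) (H p) (H q)"
proof -
  let ?E = "eucl_dist (m + (n + 1)) (H p) (H q)"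
  have "dist_to_set d B p
      \<le> \<bar>(dist_to_set d A p - dist_to_set d B p) - (dist_to_set d A q - dist_to_set d B q)\<bar>"
    using dist_to_set_eq_0[OF assms(2)] dist_to_set_eq_0[OF assms(3)] dist_to_set_nonneg[OF assms(1), of q]
    by linarith
  then have "(c + K) * dist_to_set d B p \<le> (c + K) * ?E"
    using eucl_dist_glue_map_bounds(3)[where m=m and n=n and F=F and G=G
        and \<psi>="\<lambda>x. dist_to_set d A x - dist_to_set d B x" and p=p and q=q]
      assms(4,5) unfolding H_def by (intro mult_left_mono) auto
  then show ?thesis
    using separation_by_extension[OF assms(4,5,3) G_lip G_lower, of p]
      eucl_dist_glue_map_bounds(2)[where m=m and n=n and F=F and G=G and p=p and q=q
        and \<psi>="\<lambda>x. dist_to_set d A x - dist_to_set d B x"] unfolding H_def by (simp add: distrib_right)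
qed

lemma eucl_embeddable_Un:
  assumes "eucl_embeddable d A" "eucl_embeddable d B"
  shows "eucl_embeddable d (A \<union> B)"
proof (cases "A = {} \<or> B = {}")
  case True
  then show ?thesis
    using assms by auto
next
  case False
  then have "A \<noteq> {}" "B \<noteq> {}"
    by auto
  obtain N1 F c1 K1 where "0 < c1" "0 \<le> K1"
    and F_lower: "\<And>a b. a \<in> A \<Longrightarrow> b \<in> A \<Longrightarrow> c1 * d a b \<le> eucl_dist N1 (F a) (F b)"
    and F_lip: "\<And>p q. eucl_dist N1 (F p) (F q) \<le> K1 * d p q"
    using eucl_embeddable_extensionE[OF assms(1) \<open>A \<noteq> {}\<close>] by metis
  obtain N2 G c2 K2 where "0 < c2" "0 \<le> K2"
    and G_lower: "\<And>a b. a \<in> B \<Longrightarrow> b \<in> B \<Longrightarrow> c2 * d a b \<le> eucl_dist N2 (G a) (G b)"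
    and G_lip: "\<And>p q. eucl_dist N2 (G p) (G q) \<le> K2 * d p q"
    using eucl_embeddable_extensionE[OF assms(2) \<open>B \<noteq> {}\<close>] by metis
  define \<psi> where "\<psi> x = dist_to_set d A x - dist_to_set d B x" for x
  define E where "E p q = eucl_dist (N1 + (N2 + 1)) (glue_map N1 N2 F G \<psi> p) (glue_map N1 N2 F G \<psi> q)"
    for p q
  note E_bounds = eucl_dist_glue_map_bounds[where m=N1 and n=N2 and F=F and G=G and \<psi>=\<psi>,
      folded E_def]
  define s where "s = c2 + K2 + 1"
  have "1 \<le> s"
    unfolding s_def using \<open>0 < c2\<close> \<open>0 \<le> K2\<close> by simp
  have lower: "min c1 c2 * d a b \<le> s * E a b" if "a \<in> A \<union> B" "b \<in> A \<union> B" for a b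
  proof -
    have "min c1 c2 * d a b \<le> c1 * d a b" "min c1 c2 * d a b \<le> c2 * d a b"
      using nonneg[of a b] by (auto intro: mult_right_mono)
    moreover have "1 * E a b \<le> s * E a b"
      using \<open>1 \<le> s\<close> unfolding E_def by (intro mult_right_mono) (simp_all add: eucl_dist_nonneg)
    moreover have "c2 * d p q \<le> s * E p q" if "p \<in> A" "q \<in> B" for p q
      using glue_map_lower_across[OF \<open>A \<noteq> {}\<close> that \<open>0 < c2\<close> \<open>0 \<le> K2\<close> G_lip G_lower]
      unfolding s_def E_def \<psi>_def .
    moreover have "E a b = E b a"
      unfolding E_def by (rule eucl_dist_commute)
    ultimately show ?thesis
      using that F_lower[of a b] E_bounds(1)[of a b] G_lower[of a b] E_bounds(2)[of a b] commute[of a b]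
      by (smt (verit) UnE)
  qed
  show ?thesis
  proof (rule eucl_embeddableI[where c="min c1 c2 / s" and C="K1 + K2 + 2" and f="glue_map N1 N2 F G \<psi>"
        and N="N1 + (N2 + 1)"])
    fix a b assume ab: "a \<in> A \<union> B" "b \<in> A \<union> B"
    show "min c1 c2 / s * d a b \<le> eucl_dist (N1 + (N2 + 1)) (glue_map N1 N2 F G \<psi> a) (glue_map N1 N2 F G \<psi> b)"
      using lower[OF ab] \<open>1 \<le> s\<close> unfolding E_def by (simp add: divide_le_eq mult.commute)
    have "\<bar>\<psi> a - \<psi> b\<bar> \<le> 2 * d a b"
      using dist_to_set_lipschitz[OF \<open>A \<noteq> {}\<close>, of a b] dist_to_set_lipschitz[OF \<open>B \<noteq> {}\<close>, of a b]
      unfolding \<psi>_def by linarith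
    then show "eucl_dist (N1 + (N2 + 1)) (glue_map N1 N2 F G \<psi> a) (glue_map N1 N2 F G \<psi> b) \<le> (K1 + K2 + 2) * d a b"
      using E_bounds(4)[of a b] F_lip[of a b] G_lip[of a b] unfolding E_def by (simp add: algebra_simps)
  qed (use \<open>0 < c1\<close> \<open>0 < c2\<close> \<open>1 \<le> s\<close> nonneg in auto)
qed

lemma eucl_embeddable_Union:
  "finite \<T> \<Longrightarrow> (\<And>T. T \<in> \<T> \<Longrightarrow> eucl_embeddable d T) \<Longrightarrow> eucl_embeddable d (\<Union>\<T>)"
  by (induction rule: finite_induct) (auto simp: eucl_embeddable_empty eucl_embeddable_Un)

end

section \<open>A snowflake embedding of the line\<close>

lemma norm_cis_diff_squared: "(cmod (cis a - cis b))^2 = 2 - 2 * cos (a - b)"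
  using cmod_diff_squared[of 1 a 1 b] by (simp add: cis_conv_exp)

lemma norm_cis_diff_le: "cmod (cis a - cis b) \<le> \<bar>a - b\<bar>"
proof -
  have "2 * ((a - b) / 2) = a - b"
    by simp
  then have cos_eq: "cos (a - b) = 1 - 2 * (sin ((a - b) / 2))^2"
    using cos_double_sin[of "(a - b) / 2"] by metis
  have "\<bar>sin ((a - b) / 2)\<bar>^2 \<le> \<bar>(a - b) / 2\<bar>^2"
    by (rule power_mono[OF abs_sin_x_le_abs_x abs_ge_zero])
  then have "(cmod (cis a - cis b))^2 \<le> (a - b)^2"
    unfolding norm_cis_diff_squared cos_eq by (simp add: power_divide)
  then show ?thesis
    using power2_le_imp_le[of "cmod (cis a - cis b)" "\<bar>a - b\<bar>"] by simp
qed

lemma norm_cis_diff_ge: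
  assumes "pi / 2 \<le> \<bar>a - b\<bar>" "\<bar>a - b\<bar> \<le> pi"
  shows "sqrt 2 \<le> cmod (cis a - cis b)"
proof -
  have "0 \<le> cos (pi - \<bar>a - b\<bar>)"
    using assms by (intro cos_ge_zero) auto
  then have "cos \<bar>a - b\<bar> \<le> 0"
    by (simp add: cos_pi_minus)
  then have "cos (a - b) \<le> 0"
    by simp
  then have "2 \<le> (cmod (cis a - cis b))^2"
    unfolding norm_cis_diff_squared by simp
  then show ?thesis
    by (simp add: real_le_lsqrt real_sqrt_le_iff)
qed

definition snow_rho :: real where
  "snow_rho = 1 / sqrt 2"

lemma snow_rho_pos: "0 < snow_rho" and snow_rho_less_1: "snow_rho < 1"
  unfolding snow_rho_def by auto

lemma snow_rho_pow_squared: "(snow_rho ^ j)^2 = 1 / 2 ^ j"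
proof -
  have "(snow_rho ^ j)^2 = (snow_rho^2) ^ j"
    by (simp flip: power_mult add: mult.commute)
  also have "snow_rho^2 = 1 / 2"
    unfolding snow_rho_def by (simp add: power_divide)
  finally show ?thesis
    by (simp add: power_one_over)
qed

lemma snow_rho_pow_add_10: "snow_rho ^ (j + 10 * k) = snow_rho ^ j * (1 / 32) ^ k"
proof -
  have "snow_rho ^ 10 = (snow_rho ^ 5)^2"
    by (simp flip: power_mult)
  also have "\<dots> = 1 / 32"
    by (simp only: snow_rho_pow_squared) simp
  finally have "snow_rho ^ 10 = 1 / 32" .
  then show ?thesis
    by (simp only: power_add power_mult)
qed

text \<open>Amplitude \<open>2 powr (- j / 2)\<close> at frequency \<open>2 ^ j\<close>: the exponent \<open>1 / 2\<close> of the snowflake.\<close>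
definition snow_term :: "nat \<Rightarrow> real \<Rightarrow> complex" where
  "snow_term j t = rcis (snow_rho ^ j) (pi * 2 ^ j * t)"

lemma norm_snow_term: "cmod (snow_term j t) = snow_rho ^ j"
  using snow_rho_pos by (simp add: snow_term_def)

lemma norm_snow_term_diff:
  "cmod (snow_term j s - snow_term j t) = snow_rho ^ j * cmod (cis (pi * 2 ^ j * s) - cis (pi * 2 ^ j * t))"
proof -
  have "snow_term j s - snow_term j t = snow_rho ^ j * (cis (pi * 2 ^ j * s) - cis (pi * 2 ^ j * t))"
    by (simp add: snow_term_def rcis_def algebra_simps)
  then show ?thesis
    using snow_rho_pos by (simp add: norm_mult norm_power)
qed

lemma norm_snow_term_diff_le_lipschitz:
  "cmod (snow_term j s - snow_term j t) \<le> pi * (2 ^ j * \<bar>s - t\<bar>) * snow_rho ^ j"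
proof -
  have "cmod (cis (pi * 2 ^ j * s) - cis (pi * 2 ^ j * t)) \<le> pi * (2 ^ j * \<bar>s - t\<bar>)"
    using norm_cis_diff_le[of "pi * 2 ^ j * s" "pi * 2 ^ j * t"]
    by (simp add: abs_mult flip: right_diff_distrib)
  then show ?thesis
    unfolding norm_snow_term_diff using snow_rho_pos
    by (simp add: mult_left_mono mult.commute)
qed

lemma norm_snow_term_diff_le: "cmod (snow_term j s - snow_term j t) \<le> 2 * snow_rho ^ j"
  using norm_triangle_ineq4[of "snow_term j s" "snow_term j t"] by (simp add: norm_snow_term)

lemma norm_snow_term_diff_ge:
  assumes "1 / 2 \<le> 2 ^ j * \<bar>s - t\<bar>" "2 ^ j * \<bar>s - t\<bar> \<le> 1"
  shows "sqrt 2 * snow_rho ^ j \<le> cmod (snow_term j s - snow_term j t)"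
proof -
  have scale: "\<bar>pi * 2 ^ j * s - pi * 2 ^ j * t\<bar> = pi * (2 ^ j * \<bar>s - t\<bar>)"
    by (simp add: abs_mult flip: right_diff_distrib)
  have "pi * (1 / 2) \<le> pi * (2 ^ j * \<bar>s - t\<bar>)" "pi * (2 ^ j * \<bar>s - t\<bar>) \<le> pi * 1"
    using assms by (intro mult_left_mono; simp)+
  then have "sqrt 2 \<le> cmod (cis (pi * 2 ^ j * s) - cis (pi * 2 ^ j * t))"
    by (intro norm_cis_diff_ge) (simp_all add: scale)
  then show ?thesis
    unfolding norm_snow_term_diff using snow_rho_pos by (simp add: mult.commute)
qed

lemma sum_power_reverse_le:
  fixes x :: real
  assumes "0 \<le> x" "x < 1"
  shows "(\<Sum>i<m. x ^ (m - i)) \<le> x / (1 - x)"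
proof (induction m)
  case 0
  then show ?case
    using assms by simp
next
  case (Suc m)
  have "(\<Sum>i<Suc m. x ^ (Suc m - i)) = x * (\<Sum>i<m. x ^ (m - i)) + x"
    by (simp add: sum_distrib_left Suc_diff_le flip: power_Suc)
  also have "\<dots> \<le> x * (x / (1 - x)) + x"
    using mult_left_mono[OF Suc.IH assms(1)] by simp
  also have "\<dots> = x / (1 - x)"
    using assms by (simp add: field_simps)
  finally show ?case .
qed

lemma norm_suminf_minus_term_le:
  fixes d :: "nat \<Rightarrow> 'a::banach"
  assumes "summable d" "0 \<le> x" "x < 1" "0 \<le> B"
    and below: "\<And>m. m < m0 \<Longrightarrow> norm (d m) \<le> B * x ^ (m0 - m)"
    and above: "\<And>n. norm (d (n + Suc m0)) \<le> B * x ^ Suc n"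
  shows "norm (suminf d - d m0) \<le> 2 * B * x / (1 - x)"
proof -
  have "suminf d = (\<Sum>n. d (n + Suc m0)) + (\<Sum>i<Suc m0. d i)"
    by (rule suminf_split_initial_segment[OF assms(1)])
  then have split: "suminf d - d m0 = (\<Sum>n. d (n + Suc m0)) + (\<Sum>i<m0. d i)"
    by simp
  have geom: "summable (\<lambda>n. x ^ n)"
    using assms(2,3) by (intro summable_geometric) auto
  have "norm (\<Sum>n. d (n + Suc m0)) \<le> (\<Sum>n. B * x * x ^ n)"
    using norm_suminf_le[OF above] summable_mult[OF geom, of "B * x"] by (simp add: mult.assoc)
  also have "\<dots> = B * x / (1 - x)"
    using suminf_mult[OF geom, of "B * x"] assms(2,3) by (simp add: suminf_geometric)
  finally have tail: "norm (\<Sum>n. d (n + Suc m0)) \<le> B * x / (1 - x)" .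
  have "norm (\<Sum>i<m0. d i) \<le> (\<Sum>i<m0. norm (d i))"
    by (rule norm_sum)
  also have "\<dots> \<le> (\<Sum>i<m0. B * x ^ (m0 - i))"
    by (intro sum_mono below) simp
  also have "\<dots> = B * (\<Sum>i<m0. x ^ (m0 - i))"
    by (simp add: sum_distrib_left)
  also have "\<dots> \<le> B * (x / (1 - x))"
    using sum_power_reverse_le[OF assms(2,3)] assms(4) by (rule mult_left_mono)
  finally have head: "norm (\<Sum>i<m0. d i) \<le> B * x / (1 - x)"
    by simp
  show ?thesis
    unfolding split using norm_triangle_ineq[of "\<Sum>n. d (n + Suc m0)" "\<Sum>i<m0. d i"] tail head
    by linarith
qed

text \<open>Only every tenth frequency enters one series, so that at every scale a single
  term dominates the increment of the series.\<close>
definition snow_series :: "nat \<Rightarrow> real \<Rightarrow> complex" where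
  "snow_series r t = (\<Sum>m. snow_term (m * 10 + r) t)"

lemma summable_snow_term: "summable (\<lambda>m. snow_term (m * 10 + r) t)"
proof (rule summable_comparison_test)
  show "summable (\<lambda>m. snow_rho ^ m)"
    using snow_rho_pos snow_rho_less_1 by (intro summable_geometric) auto
  show "\<exists>N. \<forall>n\<ge>N. norm (snow_term (n * 10 + r) t) \<le> snow_rho ^ n"
    using snow_rho_pos snow_rho_less_1 by (auto simp: norm_snow_term intro!: power_decreasing)
qed

lemma norm_snow_series_le: "cmod (snow_series r t) \<le> 4"
proof -
  have "summable (\<lambda>m. snow_rho ^ m)"
    using snow_rho_pos snow_rho_less_1 by (intro summable_geometric) auto
  then have "cmod (snow_series r t) \<le> (\<Sum>m. snow_rho ^ m)"
    unfolding snow_series_def using snow_rho_pos snow_rho_less_1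
    by (intro norm_suminf_le) (auto simp: norm_snow_term intro!: power_decreasing)
  also have "\<dots> = 1 / (1 - snow_rho)"
    using snow_rho_pos snow_rho_less_1 by (simp add: suminf_geometric)
  also have "\<dots> \<le> 4"
  proof -
    have "4 / 3 \<le> sqrt 2"
      by (rule real_le_rsqrt) (simp add: power2_eq_square)
    then have "snow_rho \<le> 3 / 4"
      unfolding snow_rho_def by (simp add: divide_le_eq)
    then show ?thesis
      using snow_rho_less_1 by (simp add: divide_le_eq)
  qed
  finally show ?thesis .
qed

lemma norm_snow_term_diff_low_freq:
  assumes "2 ^ (j + 10 * k) * \<bar>s - t\<bar> \<le> K"
  shows "cmod (snow_term j s - snow_term j t) \<le> 4 * K * snow_rho ^ (j + 10 * k) * (1 / 32) ^ k"
proof -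
  have pow2: "(2::real) ^ (j + 10 * k) = 2 ^ j * 1024 ^ k"
    by (simp add: power_add power_mult)
  have rho: "snow_rho ^ j = snow_rho ^ (j + 10 * k) * 32 ^ k"
    unfolding snow_rho_pow_add_10 by (simp add: power_one_over)
  have "(1024::real) ^ k * (1 / 32) ^ k = 32 ^ k"
    by (simp flip: power_mult_distrib)
  then have "2 ^ j * \<bar>s - t\<bar> * snow_rho ^ j
      = 2 ^ (j + 10 * k) * \<bar>s - t\<bar> * snow_rho ^ (j + 10 * k) * (1 / 32) ^ k"
    unfolding pow2 rho by (simp add: mult_ac)
  also have "\<dots> \<le> K * snow_rho ^ (j + 10 * k) * (1 / 32) ^ k"
    using assms snow_rho_pos by (intro mult_right_mono) auto
  finally have "pi * (2 ^ j * \<bar>s - t\<bar>) * snow_rho ^ j \<le> pi * (K * snow_rho ^ (j + 10 * k) * (1 / 32) ^ k)"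
    by (simp add: mult.assoc)
  moreover have "0 \<le> K"
    using order_trans[OF _ assms, of 0] by simp
  then have "pi * (K * snow_rho ^ (j + 10 * k) * (1 / 32) ^ k) \<le> 4 * K * snow_rho ^ (j + 10 * k) * (1 / 32) ^ k"
    using pi_less_4 snow_rho_pos by (simp add: mult_right_mono mult.assoc)
  ultimately show ?thesis
    using norm_snow_term_diff_le_lipschitz[of j s t] by linarith
qed

lemma norm_snow_term_diff_high_freq:
  "cmod (snow_term (j + 10 * k) s - snow_term (j + 10 * k) t) \<le> 2 * snow_rho ^ j * (1 / 32) ^ k"
  using norm_snow_term_diff_le[of "j + 10 * k" s t] by (simp add: snow_rho_pow_add_10 mult.assoc)

lemma snow_series_diff_near_term:
  assumes "j0 = m0 * 10 + r" "2 ^ j0 * \<bar>s - t\<bar> \<le> K" "1 / 2 \<le> K"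
  shows "cmod (snow_series r s - snow_series r t - (snow_term j0 s - snow_term j0 t))
           \<le> 8 / 31 * K * snow_rho ^ j0"
proof -
  define d where "d m = snow_term (m * 10 + r) s - snow_term (m * 10 + r) t" for m
  define B where "B = 4 * K * snow_rho ^ j0"
  have "0 \<le> B"
    unfolding B_def using assms(3) snow_rho_pos by simp
  have below: "norm (d m) \<le> B * (1 / 32) ^ (m0 - m)" if "m < m0" for m
  proof -
    have "j0 = (m * 10 + r) + 10 * (m0 - m)"
      using that assms(1) by (simp add: algebra_simps diff_mult_distrib2)
    then show ?thesis
      using norm_snow_term_diff_low_freq[of "m * 10 + r" "m0 - m" s t K] assms(2)
      unfolding d_def B_def by simp
  qed
  have above: "norm (d (n + Suc m0)) \<le> B * (1 / 32) ^ Suc n" for n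
  proof -
    have idx: "(n + Suc m0) * 10 + r = j0 + 10 * Suc n"
      using assms(1) by simp
    have "norm (d (n + Suc m0)) \<le> 2 * snow_rho ^ j0 * (1 / 32) ^ Suc n"
      unfolding d_def idx by (rule norm_snow_term_diff_high_freq)
    also have "\<dots> \<le> B * (1 / 32) ^ Suc n"
      unfolding B_def using assms(3) snow_rho_pos by (simp add: mult_right_mono)
    finally show ?thesis .
  qed
  have "summable d"
    unfolding d_def by (intro summable_diff summable_snow_term)
  then have "norm (suminf d - d m0) \<le> 2 * B * (1 / 32) / (1 - 1 / 32)"
    by (rule norm_suminf_minus_term_le[OF _ _ _ \<open>0 \<le> B\<close> below above]) auto
  moreover have "suminf d = snow_series r s - snow_series r t"
    unfolding d_def snow_series_def by (simp add: suminf_diff summable_snow_term)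
  ultimately show ?thesis
    unfolding d_def B_def assms(1) by simp
qed

lemma snow_series_diff_ge:
  assumes "1 / 2 < 2 ^ J * \<bar>s - t\<bar>" "2 ^ J * \<bar>s - t\<bar> \<le> 1"
  shows "sqrt \<bar>s - t\<bar> \<le> cmod (snow_series (J mod 10) s - snow_series (J mod 10) t)"
proof -
  define X where "X = snow_series (J mod 10) s - snow_series (J mod 10) t"
  define Y where "Y = snow_term J s - snow_term J t"
  have "J = J div 10 * 10 + J mod 10"
    by simp
  from snow_series_diff_near_term[OF this assms(2)]
  have "cmod (Y - X) \<le> 8 / 31 * snow_rho ^ J"
    unfolding X_def Y_def by (simp add: norm_minus_commute)
  moreover have "sqrt 2 * snow_rho ^ J \<le> cmod Y"
    unfolding Y_def using assms by (intro norm_snow_term_diff_ge) auto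
  moreover have "1 + 8 / 31 \<le> sqrt 2"
    by (rule real_le_rsqrt) (simp add: power2_eq_square)
  then have "(1 + 8 / 31) * snow_rho ^ J \<le> sqrt 2 * snow_rho ^ J"
    using snow_rho_pos by (intro mult_right_mono) auto
  ultimately have "snow_rho ^ J \<le> cmod X"
    using norm_triangle_ineq2[of Y X] by (simp add: algebra_simps)
  moreover have "\<bar>s - t\<bar> \<le> (snow_rho ^ J)^2"
    using assms(2) unfolding snow_rho_pow_squared by (simp add: field_simps)
  ultimately show ?thesis
    unfolding X_def using snow_rho_pos by (meson order_trans real_le_lsqrt zero_le_power less_imp_le)
qed

lemma snow_series_diff_le:
  assumes "1 / 2 < 2 ^ J * \<bar>s - t\<bar>" "2 ^ J * \<bar>s - t\<bar> \<le> 1" "r < 10"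
  shows "cmod (snow_series r s - snow_series r t) \<le> 4320 * sqrt \<bar>s - t\<bar>"
proof -
  define j0 where "j0 = J div 10 * 10 + r"
  have "j0 \<le> J + 9" "J \<le> j0 + 9"
    unfolding j0_def using assms(3) by linarith+
  then have "(2::real) ^ j0 \<le> 2 ^ (J + 9)" "(2::real) ^ J \<le> 2 ^ (j0 + 9)"
    by (intro power_increasing; simp)+
  then have "2 ^ j0 * \<bar>s - t\<bar> \<le> 2 ^ (J + 9) * \<bar>s - t\<bar>"
    "2 ^ J * \<bar>s - t\<bar> \<le> 2 ^ (j0 + 9) * \<bar>s - t\<bar>"
    by (intro mult_right_mono; simp)+
  then have "2 ^ j0 * \<bar>s - t\<bar> \<le> 512 * (2 ^ J * \<bar>s - t\<bar>)"
    "2 ^ J * \<bar>s - t\<bar> \<le> 512 * (2 ^ j0 * \<bar>s - t\<bar>)"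
    by (simp_all add: power_add mult_ac)
  then have upper: "2 ^ j0 * \<bar>s - t\<bar> \<le> 512" and lower: "1 \<le> 1024 * (2 ^ j0 * \<bar>s - t\<bar>)"
    using assms(1,2) by linarith+
  have near: "cmod (snow_series r s - snow_series r t - (snow_term j0 s - snow_term j0 t))
      \<le> 8 / 31 * 512 * snow_rho ^ j0"
    using snow_series_diff_near_term[OF j0_def upper] by simp
  have "cmod (snow_series r s - snow_series r t) \<le> 2 * snow_rho ^ j0 + 8 / 31 * 512 * snow_rho ^ j0"
    using near norm_snow_term_diff_le[of j0 s t]
      norm_triangle_ineq[of "snow_series r s - snow_series r t - (snow_term j0 s - snow_term j0 t)"
        "snow_term j0 s - snow_term j0 t"] by simp
  also have "\<dots> \<le> 135 * snow_rho ^ j0"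
    using snow_rho_pos by simp
  also have "snow_rho ^ j0 \<le> 32 * sqrt \<bar>s - t\<bar>"
  proof -
    have "(snow_rho ^ j0)^2 \<le> 1024 * \<bar>s - t\<bar>"
      using lower unfolding snow_rho_pow_squared by (simp add: field_simps)
    then show ?thesis
      using real_le_rsqrt[of "snow_rho ^ j0" "1024 * \<bar>s - t\<bar>"] by (simp add: real_sqrt_mult)
  qed
  finally show ?thesis
    by simp
qed

definition snowflake :: "real \<Rightarrow> nat \<Rightarrow> real" where
  "snowflake t i = (if even i then Re (snow_series (i div 2) t) else Im (snow_series (i div 2) t))"

lemma sum_Re_Im_squares:
  fixes z :: "nat \<Rightarrow> complex" and n :: nat
  shows "(\<Sum>i<2 * n. (if even i then Re (z (i div 2)) else Im (z (i div 2)))^2) = (\<Sum>r<n. (cmod (z r))^2)"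
  by (induction n) (simp_all add: cmod_power2)

lemma eucl_dist_snowflake:
  "eucl_dist 20 (snowflake s) (snowflake t) = sqrt (\<Sum>r<10. (cmod (snow_series r s - snow_series r t))^2)"
proof -
  have "snowflake s i - snowflake t i = (if even i then Re (snow_series (i div 2) s - snow_series (i div 2) t)
      else Im (snow_series (i div 2) s - snow_series (i div 2) t))" for i
    by (simp add: snowflake_def)
  then show ?thesis
    using sum_Re_Im_squares[where n=10 and z="\<lambda>r. snow_series r s - snow_series r t"]
    unfolding eucl_dist_def by simp
qed

lemma L2_set_snowflake_le: "L2_set (snowflake t) {..<20} \<le> 13"
proof -
  have "(\<Sum>i<20. (snowflake t i)^2) = (\<Sum>r<10. (cmod (snow_series r t))^2)"
    using sum_Re_Im_squares[where n=10 and z="\<lambda>r. snow_series r t"] unfolding snowflake_def by simp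
  also have "\<dots> \<le> (\<Sum>r<(10::nat). 4^2)"
    by (intro sum_mono power_mono norm_snow_series_le) auto
  finally show ?thesis
    unfolding L2_set_def by (intro real_le_lsqrt) auto
qed

lemma exists_dyadic_scale:
  assumes "0 < \<delta>" "\<delta> \<le> (1::real)"
  obtains J :: nat where "1 / 2 < 2 ^ J * \<delta>" "2 ^ J * \<delta> \<le> 1"
proof -
  obtain n where "1 / \<delta> < 2 ^ n"
    using real_arch_pow[of 2 "1 / \<delta>"] by auto
  then have "1 < 2 ^ n * \<delta>"
    using assms by (simp add: divide_less_eq)
  then obtain J where "\<not> 1 < 2 ^ J * \<delta>" "1 < 2 ^ Suc J * \<delta>"
    using exists_least_lemma[of "\<lambda>n. 1 < 2 ^ n * \<delta>"] assms by auto
  then show thesis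
    by (intro that[of J]) auto
qed

lemma snowflake_bounds:
  assumes "\<bar>s - t\<bar> \<le> 1"
  shows "sqrt \<bar>s - t\<bar> \<le> eucl_dist 20 (snowflake s) (snowflake t)"
    and "eucl_dist 20 (snowflake s) (snowflake t) \<le> 14000 * sqrt \<bar>s - t\<bar>"
proof -
  consider "s = t" | J where "1 / 2 < 2 ^ J * \<bar>s - t\<bar>" "2 ^ J * \<bar>s - t\<bar> \<le> 1"
    using exists_dyadic_scale[of "\<bar>s - t\<bar>"] assms by force
  then have "sqrt \<bar>s - t\<bar> \<le> eucl_dist 20 (snowflake s) (snowflake t) \<and>
      eucl_dist 20 (snowflake s) (snowflake t) \<le> 14000 * sqrt \<bar>s - t\<bar>"
  proof cases
    case 1
    then show ?thesis
      by (simp add: eucl_dist_def)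
  next
    case (2 J)
    have "(cmod (snow_series (J mod 10) s - snow_series (J mod 10) t))^2
        \<le> (\<Sum>r<10. (cmod (snow_series r s - snow_series r t))^2)"
      by (rule member_le_sum) auto
    then have lower: "sqrt \<bar>s - t\<bar> \<le> eucl_dist 20 (snowflake s) (snowflake t)"
      using snow_series_diff_ge[OF 2] unfolding eucl_dist_snowflake
      by (meson order_trans real_le_rsqrt)
    have "(\<Sum>r<10. (cmod (snow_series r s - snow_series r t))^2)
        \<le> (\<Sum>r<(10::nat). (4320 * sqrt \<bar>s - t\<bar>)^2)"
      using snow_series_diff_le[OF 2] by (intro sum_mono power_mono) auto
    also have "\<dots> = 186624000 * \<bar>s - t\<bar>"
      by (simp add: power_mult_distrib)
    also have "\<dots> \<le> 196000000 * \<bar>s - t\<bar>"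
      by (intro mult_right_mono) auto
    also have "\<dots> = (14000 * sqrt \<bar>s - t\<bar>)^2"
      by (simp add: power_mult_distrib)
    finally have "eucl_dist 20 (snowflake s) (snowflake t) \<le> 14000 * sqrt \<bar>s - t\<bar>"
      unfolding eucl_dist_snowflake by (intro real_le_lsqrt) auto
    with lower show ?thesis
      by simp
  qed
  then show "sqrt \<bar>s - t\<bar> \<le> eucl_dist 20 (snowflake s) (snowflake t)"
    and "eucl_dist 20 (snowflake s) (snowflake t) \<le> 14000 * sqrt \<bar>s - t\<bar>"
    by auto
qed

section \<open>Two model spaces\<close>

lemma L2_set_scaled_diff_bounds:
  fixes P P' :: real
  assumes "0 \<le> P" "L2_set v A \<le> M"
  shows "L2_set (\<lambda>i. P * u i - P' * v i) A \<le> P * L2_set (\<lambda>i. u i - v i) A + M * \<bar>P - P'\<bar>"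
    and "P * L2_set (\<lambda>i. u i - v i) A \<le> L2_set (\<lambda>i. P * u i - P' * v i) A + M * \<bar>P - P'\<bar>"
proof -
  have v: "\<bar>P - P'\<bar> * L2_set v A \<le> M * \<bar>P - P'\<bar>"
    using assms(2) by (metis abs_ge_zero mult.commute mult_left_mono)
  have scale: "L2_set (\<lambda>i. c * f i) A = \<bar>c\<bar> * L2_set f A" for c and f :: "'a \<Rightarrow> real"
    using L2_set_right_distrib[of "\<bar>c\<bar>" f A] by (simp add: L2_set_def power_mult_distrib)
  have "L2_set (\<lambda>i. P * u i - P' * v i) A = L2_set (\<lambda>i. P * (u i - v i) + (P - P') * v i) A"
    by (simp add: algebra_simps)
  also have "\<dots> \<le> L2_set (\<lambda>i. P * (u i - v i)) A + L2_set (\<lambda>i. (P - P') * v i) A"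
    by (rule L2_set_triangle_ineq)
  finally show "L2_set (\<lambda>i. P * u i - P' * v i) A \<le> P * L2_set (\<lambda>i. u i - v i) A + M * \<bar>P - P'\<bar>"
    using v assms(1) by (simp add: scale)
  have "P * L2_set (\<lambda>i. u i - v i) A = L2_set (\<lambda>i. P * (u i - v i)) A"
    using assms(1) by (simp add: scale)
  also have "\<dots> = L2_set (\<lambda>i. (P * u i - P' * v i) + (P' - P) * v i) A"
    by (simp add: algebra_simps)
  also have "\<dots> \<le> L2_set (\<lambda>i. P * u i - P' * v i) A + L2_set (\<lambda>i. (P' - P) * v i) A"
    by (rule L2_set_triangle_ineq)
  finally show "P * L2_set (\<lambda>i. u i - v i) A \<le> L2_set (\<lambda>i. P * u i - P' * v i) A + M * \<bar>P - P'\<bar>"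
    using v by (simp add: scale abs_minus_commute)
qed

lemma sector_snowflake_reduction:
  fixes P Q P' Q' :: real
  assumes "\<bar>Q\<bar> \<le> P" "\<bar>Q'\<bar> \<le> P'" "0 < P" "P \<le> P'"
  defines "t \<equiv> Q / (2 * P)" and "t' \<equiv> Q' / (2 * P')"
  shows "\<bar>t - t'\<bar> \<le> 1" "\<bar>P * Q' - P' * Q\<bar> = 2 * P * P' * \<bar>t - t'\<bar>"
    and "L2_set (\<lambda>i. P * snowflake t i - P' * snowflake t' i) {..<20}
           \<le> P * eucl_dist 20 (snowflake t) (snowflake t') + 13 * \<bar>P - P'\<bar>"
    and "P * eucl_dist 20 (snowflake t) (snowflake t')
           \<le> L2_set (\<lambda>i. P * snowflake t i - P' * snowflake t' i) {..<20} + 13 * \<bar>P - P'\<bar>"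
proof -
  have "\<bar>t\<bar> \<le> 1 / 2" "\<bar>t'\<bar> \<le> 1 / 2"
    unfolding t_def t'_def using assms(1-4) by (simp_all add: abs_divide divide_le_eq abs_mult)
  then show "\<bar>t - t'\<bar> \<le> 1"
    by linarith
  have "P * Q' - P' * Q = 2 * P * P' * (t' - t)"
    unfolding t_def t'_def using assms(3,4) by (simp add: field_simps)
  then show "\<bar>P * Q' - P' * Q\<bar> = 2 * P * P' * \<bar>t - t'\<bar>"
    using assms(3,4) by (simp add: abs_mult abs_minus_commute)
  show "L2_set (\<lambda>i. P * snowflake t i - P' * snowflake t' i) {..<20}
      \<le> P * eucl_dist 20 (snowflake t) (snowflake t') + 13 * \<bar>P - P'\<bar>"
    and "P * eucl_dist 20 (snowflake t) (snowflake t')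
      \<le> L2_set (\<lambda>i. P * snowflake t i - P' * snowflake t' i) {..<20} + 13 * \<bar>P - P'\<bar>"
    unfolding eucl_dist_eq_L2_set
    using L2_set_scaled_diff_bounds[where P=P and P'=P' and u="snowflake t",
        OF _ L2_set_snowflake_le[of t']] assms(3)
    by auto
qed

lemma sector_snowflake_upper:
  fixes P Q P' Q' :: real
  assumes "\<bar>Q\<bar> \<le> P" "\<bar>Q'\<bar> \<le> P'" "P \<le> P'"
  shows "L2_set (\<lambda>i. P * snowflake (Q / (2 * P)) i - P' * snowflake (Q' / (2 * P')) i) {..<20}
           \<le> 14000 * sqrt \<bar>P * Q' - P' * Q\<bar> + 13 * \<bar>P - P'\<bar>"
proof (cases "P = 0")
  case True
  then have "L2_set (\<lambda>i. P * snowflake (Q / (2 * P)) i - P' * snowflake (Q' / (2 * P')) i) {..<20}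
      = P' * L2_set (snowflake (Q' / (2 * P'))) {..<20}"
    using assms L2_set_right_distrib[of P' "snowflake (Q' / (2 * P'))" "{..<20}"]
    by (simp add: L2_set_def power_mult_distrib)
  also have "\<dots> \<le> 13 * \<bar>P - P'\<bar>"
    using True assms L2_set_snowflake_le by (simp add: mult.commute mult_left_mono)
  finally show ?thesis
    using real_sqrt_ge_zero[OF abs_ge_zero[of "P * Q' - P' * Q"]] by linarith
next
  case False
  then have "0 < P"
    using assms(1) by linarith
  define t t' where "t = Q / (2 * P)" and "t' = Q' / (2 * P')"
  note est = sector_snowflake_reduction[OF assms(1,2) \<open>0 < P\<close> assms(3), folded t_def t'_def]
  have "P * sqrt \<bar>t - t'\<bar> = sqrt (P^2 * \<bar>t - t'\<bar>)"
    using \<open>0 < P\<close> by (simp add: real_sqrt_mult)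
  also have "\<dots> \<le> sqrt \<bar>P * Q' - P' * Q\<bar>"
    unfolding est(2) using \<open>0 < P\<close> assms(3)
    by (intro real_sqrt_le_mono mult_right_mono) (auto simp: power2_eq_square)
  finally have "P * (14000 * sqrt \<bar>t - t'\<bar>) \<le> 14000 * sqrt \<bar>P * Q' - P' * Q\<bar>"
    by simp
  moreover have "P * eucl_dist 20 (snowflake t) (snowflake t') \<le> P * (14000 * sqrt \<bar>t - t'\<bar>)"
    using snowflake_bounds(2)[OF est(1)] \<open>0 < P\<close> by (intro mult_left_mono) auto
  ultimately show ?thesis
    using est(3) unfolding t_def t'_def by linarith
qed

lemma sector_snowflake_lower:
  fixes P Q P' Q' :: real
  assumes "\<bar>Q\<bar> \<le> P" "\<bar>Q'\<bar> \<le> P'" "P \<le> P'"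
  shows "sqrt \<bar>P * Q' - P' * Q\<bar>
           \<le> 2 * L2_set (\<lambda>i. P * snowflake (Q / (2 * P)) i - P' * snowflake (Q' / (2 * P')) i) {..<20}
             + 26 * \<bar>P - P'\<bar>"
proof (cases "P = 0")
  case True
  then show ?thesis
    using assms by simp
next
  case False
  then have "0 < P"
    using assms(1) by linarith
  define t t' where "t = Q / (2 * P)" and "t' = Q' / (2 * P')"
  note est = sector_snowflake_reduction[OF assms(1,2) \<open>0 < P\<close> assms(3), folded t_def t'_def]
  show ?thesis
  proof (cases "P' \<le> 2 * P")
    case True
    have "\<bar>P * Q' - P' * Q\<bar> \<le> (2 * P)^2 * \<bar>t - t'\<bar>"
      unfolding est(2) using True \<open>0 < P\<close>
      by (intro mult_right_mono) (auto simp: power2_eq_square)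
    then have "sqrt \<bar>P * Q' - P' * Q\<bar> \<le> 2 * P * sqrt \<bar>t - t'\<bar>"
      using \<open>0 < P\<close> real_sqrt_le_mono by (fastforce simp: real_sqrt_mult)
    also have "\<dots> \<le> 2 * (P * eucl_dist 20 (snowflake t) (snowflake t'))"
      using snowflake_bounds(1)[OF est(1)] \<open>0 < P\<close> by simp
    finally show ?thesis
      using est(4) unfolding t_def t'_def by linarith
  next
    case False
    have "\<bar>P * Q' - P' * Q\<bar> \<le> 2 * P * P'"
      unfolding est(2) using mult_left_mono[OF est(1), of "2 * P * P'"] \<open>0 < P\<close> assms(3)
      by simp
    also have "\<dots> \<le> (2 * (P' - P))^2"
    proof -
      have "0 \<le> (2 * P' - P) * (P' - 2 * P)"
        using False \<open>0 < P\<close> by (intro mult_nonneg_nonneg) auto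
      moreover have "(2 * (P' - P))^2 - 2 * P * P' = 2 * ((2 * P' - P) * (P' - 2 * P))"
        by (simp add: power2_eq_square algebra_simps)
      ultimately show ?thesis
        by linarith
    qed
    finally have "sqrt \<bar>P * Q' - P' * Q\<bar> \<le> sqrt ((2 * (P' - P))^2)"
      by (rule real_sqrt_le_mono)
    also have "\<dots> = 2 * \<bar>P - P'\<bar>"
      by (simp add: abs_if)
    finally show ?thesis
      using L2_set_nonneg[of "\<lambda>i. P * snowflake (Q / (2 * P)) i - P' * snowflake (Q' / (2 * P')) i"
          "{..<20}"] abs_ge_zero[of "P - P'"] by argo
  qed
qed

lemma sqrt_sum_squares_comparable:
  fixes h S c A :: real
  assumes "0 \<le> h" "0 \<le> S" "0 \<le> c" "1 \<le> A" "S \<le> A * (h + c)" "c \<le> A * (h + S)"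
  shows "1 / (2 * A + 1) * (h + c) \<le> sqrt (h^2 + S^2)" "sqrt (h^2 + S^2) \<le> (A + 1) * (h + c)"
proof -
  define r where "r = sqrt (h^2 + S^2)"
  have "h \<le> r" "A * h \<le> A * r" "A * S \<le> A * r"
    unfolding r_def using assms(4) by (auto intro: mult_left_mono)
  moreover have "(2 * A + 1) * r = 2 * (A * r) + r"
    by (simp add: algebra_simps)
  ultimately have "h + c \<le> (2 * A + 1) * r"
    using assms(6) by (simp add: distrib_left)
  then show "1 / (2 * A + 1) * (h + c) \<le> sqrt (h^2 + S^2)"
    unfolding r_def using assms(4) by (simp add: divide_le_eq mult.commute)
  have "sqrt (h^2 + S^2) \<le> h + S"
    using assms(1,2) by (rule sqrt_sum_squares_le_sum)
  also have "\<dots> \<le> (A + 1) * (h + c)"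
    using assms(1,3,4,5) mult_left_mono[OF assms(4) assms(1)] by (simp add: algebra_simps)
  finally show "sqrt (h^2 + S^2) \<le> (A + 1) * (h + c)" .
qed

definition sector_dist :: "real \<times> real \<Rightarrow> real \<times> real \<Rightarrow> real" where
  "sector_dist p q = dist p q + sqrt \<bar>fst p * snd q - fst q * snd p\<bar>"

text \<open>On the sector \<open>fst p = 0\<close> forces \<open>snd p = 0\<close>, so the junk value of the division by
  zero is harmless.\<close>
definition sector_map :: "real \<times> real \<Rightarrow> nat \<Rightarrow> real" where
  "sector_map p = append_coords 1 (\<lambda>_. fst p)
     (append_coords 1 (\<lambda>_. snd p) (\<lambda>i. fst p * snowflake (snd p / (2 * fst p)) i))"

lemma sector_embeddable: "eucl_embeddable sector_dist {p. \<bar>snd p\<bar> \<le> fst p}"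
proof (rule eucl_embeddableI[where c="1 / (2 * 14000 + 1)" and C="14000 + 1" and f=sector_map
      and N="1 + (1 + 20)"])
  fix p q :: "real \<times> real"
  assume "p \<in> {p. \<bar>snd p\<bar> \<le> fst p}" "q \<in> {p. \<bar>snd p\<bar> \<le> fst p}"
  moreover obtain P Q P' Q' where pq: "p = (P, Q)" "q = (P', Q')"
    by fastforce
  ultimately have sector: "\<bar>Q\<bar> \<le> P" "\<bar>Q'\<bar> \<le> P'"
    by auto
  define S where "S = L2_set (\<lambda>i. P * snowflake (Q / (2 * P)) i - P' * snowflake (Q' / (2 * P')) i) {..<20}"
  define c where "c = sqrt \<bar>P * Q' - P' * Q\<bar>"
  have "0 \<le> S" "0 \<le> c"
    unfolding S_def c_def by simp_all
  have "\<bar>P - P'\<bar> \<le> dist p q"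
    unfolding pq using dist_fst_le[of "(P, Q)" "(P', Q')"] by (simp add: dist_real_def)
  have est: "S \<le> 14000 * c + 13 * \<bar>P - P'\<bar> \<and> c \<le> 2 * S + 26 * \<bar>P - P'\<bar>"
  proof (cases "P \<le> P'")
    case True
    then show ?thesis
      using sector_snowflake_upper[OF sector True] sector_snowflake_lower[OF sector True]
      unfolding S_def c_def by simp
  next
    case False
    have "S = L2_set (\<lambda>i. P' * snowflake (Q' / (2 * P')) i - P * snowflake (Q / (2 * P)) i) {..<20}"
      unfolding S_def L2_set_def by (simp add: power2_commute)
    moreover have "c = sqrt \<bar>P' * Q - P * Q'\<bar>"
      unfolding c_def by (simp add: abs_minus_commute)
    ultimately show ?thesis
      using sector_snowflake_upper[OF sector(2,1)] sector_snowflake_lower[OF sector(2,1)] False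
      by (simp add: abs_minus_commute)
  qed
  have "S \<le> 14000 * (dist p q + c)" "c \<le> 14000 * (dist p q + S)"
    using est[THEN conjunct1] est[THEN conjunct2] \<open>0 \<le> S\<close> \<open>0 \<le> c\<close>
      \<open>\<bar>P - P'\<bar> \<le> dist p q\<close> by argo+
  moreover have "eucl_dist (1 + (1 + 20)) (sector_map p) (sector_map q) = sqrt ((dist p q)^2 + S^2)"
    unfolding sector_map_def eucl_dist_append_coords eucl_dist_1 pq S_def
    by (simp add: eucl_dist_eq_L2_set dist_Pair_Pair dist_real_def)
  moreover have "sector_dist p q = dist p q + c"
    unfolding sector_dist_def pq c_def by simp
  ultimately show "1 / (2 * 14000 + 1) * sector_dist p q
      \<le> eucl_dist (1 + (1 + 20)) (sector_map p) (sector_map q)"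
    and "eucl_dist (1 + (1 + 20)) (sector_map p) (sector_map q) \<le> (14000 + 1) * sector_dist p q"
    using sqrt_sum_squares_comparable[of "dist p q" S c 14000] \<open>0 \<le> S\<close> \<open>0 \<le> c\<close> by simp_all
  show "0 \<le> sector_dist p q"
    unfolding sector_dist_def by simp
qed simp

definition strip_dist :: "real \<times> real \<Rightarrow> real \<times> real \<Rightarrow> real" where
  "strip_dist p q = \<bar>fst p - fst q\<bar> + sqrt \<bar>snd p - snd q\<bar>"

definition strip_map :: "real \<Rightarrow> real \<times> real \<Rightarrow> nat \<Rightarrow> real" where
  "strip_map R p = append_coords 1 (\<lambda>_. fst p) (snowflake (snd p / (2 * R)))"

lemma strip_embeddable:
  assumes "0 < R"
  shows "eucl_embeddable strip_dist {p. \<bar>snd p\<bar> \<le> R}"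
proof -
  define k where "k = sqrt (2 * R)"
  define A where "A = max 1 (max k (14000 / k))"
  have "0 < k"
    unfolding k_def using assms by simp
  have "1 \<le> A"
    unfolding A_def by simp
  show ?thesis
  proof (rule eucl_embeddableI[where c="1 / (2 * A + 1)" and C="A + 1" and f="strip_map R" and N="1 + 20"])
    fix p q :: "real \<times> real"
    assume "p \<in> {p. \<bar>snd p\<bar> \<le> R}" "q \<in> {p. \<bar>snd p\<bar> \<le> R}"
    then have "\<bar>snd p / (2 * R) - snd q / (2 * R)\<bar> \<le> 1"
      using assms by (simp add: abs_divide divide_le_eq flip: diff_divide_distrib)
    moreover have "sqrt \<bar>snd p / (2 * R) - snd q / (2 * R)\<bar> = sqrt \<bar>snd p - snd q\<bar> / k"
      unfolding k_def using assms by (simp add: abs_divide real_sqrt_divide flip: diff_divide_distrib)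
    moreover define S where "S = eucl_dist 20 (snowflake (snd p / (2 * R))) (snowflake (snd q / (2 * R)))"
    ultimately have "sqrt \<bar>snd p - snd q\<bar> \<le> k * S" "S \<le> 14000 / k * sqrt \<bar>snd p - snd q\<bar>"
      using snowflake_bounds \<open>0 < k\<close> by (metis divide_le_eq mult.commute times_divide_eq_left)+
    moreover have "k * S \<le> A * S" "14000 / k * sqrt \<bar>snd p - snd q\<bar> \<le> A * sqrt \<bar>snd p - snd q\<bar>"
      unfolding A_def S_def by (intro mult_right_mono; simp add: eucl_dist_nonneg)+
    moreover have "A * S \<le> A * (\<bar>fst p - fst q\<bar> + S)"
      "A * sqrt \<bar>snd p - snd q\<bar> \<le> A * (\<bar>fst p - fst q\<bar> + sqrt \<bar>snd p - snd q\<bar>)"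
      using \<open>1 \<le> A\<close> by (intro mult_left_mono; simp)+
    ultimately have "S \<le> A * (\<bar>fst p - fst q\<bar> + sqrt \<bar>snd p - snd q\<bar>)"
      "sqrt \<bar>snd p - snd q\<bar> \<le> A * (\<bar>fst p - fst q\<bar> + S)"
      by linarith+
    moreover have "eucl_dist (1 + 20) (strip_map R p) (strip_map R q) = sqrt (\<bar>fst p - fst q\<bar>^2 + S^2)"
      unfolding strip_map_def eucl_dist_append_coords eucl_dist_1 S_def by simp
    ultimately show "1 / (2 * A + 1) * strip_dist p q \<le> eucl_dist (1 + 20) (strip_map R p) (strip_map R q)"
      and "eucl_dist (1 + 20) (strip_map R p) (strip_map R q) \<le> (A + 1) * strip_dist p q"
      using sqrt_sum_squares_comparable[of "\<bar>fst p - fst q\<bar>" S "sqrt \<bar>snd p - snd q\<bar>" A] \<open>1 \<le> A\<close>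
      unfolding strip_dist_def S_def by (simp_all add: eucl_dist_nonneg)
    show "0 \<le> strip_dist p q"
      unfolding strip_dist_def by simp
  qed (use \<open>1 \<le> A\<close> in simp)
qed

section \<open>Planar pieces of the Heisenberg group\<close>

interpretation koranyi: pseudometric koranyi
  by unfold_locales (use koranyi_commute koranyi_triangle koranyi_nonneg koranyi_self in auto)

text \<open>In the coordinates \<open>u\<close> along the horizontal line and \<open>w = z - k u / 2\<close>, a vertical
  plane carries the strip metric.\<close>
lemma vertical_plane_coordinates:
  fixes c s k :: real and p q :: "real^3"
  assumes cs: "c^2 + s^2 = 1" and "c * p$1 + s * p$2 = k" "c * q$1 + s * q$2 = k"
  defines "u \<equiv> \<lambda>x::real^3. - s * x$1 + c * x$2"
  shows "horiz_sqdist p q = (u p - u q)^2"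
    and "height_diff p q = (p$3 - k / 2 * u p) - (q$3 - k / 2 * u q)"
proof -
  have xy: "x$1 = c * k - s * u x" "x$2 = s * k + c * u x" if "c * x$1 + s * x$2 = k" for x
  proof -
    have "c * k - s * u x = (c^2 + s^2) * x$1" "s * k + c * u x = (c^2 + s^2) * x$2"
      unfolding that[symmetric] u_def by (simp_all add: algebra_simps power2_eq_square)
    then show "x$1 = c * k - s * u x" "x$2 = s * k + c * u x"
      using cs by simp_all
  qed
  have "horiz_sqdist p q = (c^2 + s^2) * (u p - u q)^2"
    unfolding horiz_sqdist_def xy[OF assms(2)] xy[OF assms(3)] by (simp add: power2_eq_square algebra_simps)
  then show "horiz_sqdist p q = (u p - u q)^2"
    using cs by simp
  have "(c * k - s * u p) * (s * k + c * u q) - (c * k - s * u q) * (s * k + c * u p)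
      = k * (c^2 + s^2) * (u q - u p)"
    by algebra
  then show "height_diff p q = (p$3 - k / 2 * u p) - (q$3 - k / 2 * u q)"
    unfolding height_diff_def xy[OF assms(2)] xy[OF assms(3)] using cs by (simp add: algebra_simps)
qed

lemma vertical_plane_embeddable:
  assumes cs: "c^2 + s^2 = 1" and T: "\<And>p. p \<in> T \<Longrightarrow> c * p$1 + s * p$2 = k"
    and "bounded T"
  shows "eucl_embeddable koranyi T"
proof -
  define u where "u x = - s * x$1 + c * x$2" for x :: "real^3"
  define w where "w x = x$3 - k / 2 * u x" for x :: "real^3"
  have "bounded (w ` T)"
    using \<open>bounded T\<close> unfolding w_def u_def
    by (rule bounded_linear_image) (intro bounded_linear_intros bounded_linear_vec_nth)
  then obtain R where R: "\<And>p. p \<in> T \<Longrightarrow> \<bar>w p\<bar> \<le> R"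
    unfolding bounded_iff by auto
  show ?thesis
  proof (rule eucl_embeddable_pullback[OF strip_embeddable, where \<phi>="\<lambda>p. (u p, w p)" and c="1/2" and C=2])
    show "0 < max R 1"
      by simp
    show "(\<lambda>p. (u p, w p)) ` T \<subseteq> {p. \<bar>snd p\<bar> \<le> max R 1}"
      using R by fastforce
    fix p q assume "p \<in> T" "q \<in> T"
    note coords = vertical_plane_coordinates[OF cs T[OF \<open>p \<in> T\<close>] T[OF \<open>q \<in> T\<close>], folded u_def]
    have "strip_dist (u p, w p) (u q, w q) = sqrt (horiz_sqdist p q) + sqrt \<bar>height_diff p q\<bar>"
      unfolding strip_dist_def coords w_def by simp
    then show "1 / 2 * koranyi p q \<le> strip_dist (u p, w p) (u q, w q)"
      and "strip_dist (u p, w p) (u q, w q) \<le> 2 * koranyi p q"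
      using koranyi_le_horiz_plus_height[of p q] horiz_plus_height_le_koranyi[of p q]
        real_sqrt_ge_zero[OF horiz_sqdist_nonneg[of p q]] real_sqrt_ge_zero[OF abs_ge_zero[of "height_diff p q"]]
      by argo+
  qed (simp_all add: koranyi_nonneg)
qed

text \<open>Centred at the characteristic point \<open>(2 \<beta>, -2 \<alpha>)\<close> of the plane, \<open>height_diff\<close> is half
  the cross product of the horizontal positions; \<open>(P, Q)\<close> are these positions rotated by \<open>(a, b)\<close>.\<close>
lemma nonvertical_plane_coordinates:
  fixes a b \<alpha> \<beta> \<gamma> :: real and p q :: "real^3"
  assumes ab: "a^2 + b^2 = 1"
    and "p$3 = \<alpha> * p$1 + \<beta> * p$2 + \<gamma>" "q$3 = \<alpha> * q$1 + \<beta> * q$2 + \<gamma>"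
  defines "P \<equiv> \<lambda>x::real^3. a * (x$1 - 2 * \<beta>) + b * (x$2 + 2 * \<alpha>)"
    and "Q \<equiv> \<lambda>x::real^3. - b * (x$1 - 2 * \<beta>) + a * (x$2 + 2 * \<alpha>)"
  shows "horiz_sqdist p q = (P p - P q)^2 + (Q p - Q q)^2"
    and "2 * height_diff p q = P p * Q q - P q * Q p"
proof -
  define X Y where "X x = x$1 - 2 * \<beta>" and "Y x = x$2 + 2 * \<alpha>" for x :: "real^3"
  have "(P p - P q)^2 + (Q p - Q q)^2 = (a^2 + b^2) * ((X p - X q)^2 + (Y p - Y q)^2)"
    unfolding P_def Q_def X_def Y_def by algebra
  then show "horiz_sqdist p q = (P p - P q)^2 + (Q p - Q q)^2"
    using ab unfolding horiz_sqdist_def X_def Y_def by simp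
  have "P p * Q q - P q * Q p = (a^2 + b^2) * (X p * Y q - X q * Y p)"
    unfolding P_def Q_def X_def Y_def by algebra
  moreover have "2 * height_diff p q = X p * Y q - X q * Y p"
    unfolding height_diff_def assms(2,3) X_def Y_def by (simp add: algebra_simps)
  ultimately show "2 * height_diff p q = P p * Q q - P q * Q p"
    using ab by simp
qed

lemma nonvertical_plane_sector_embeddable:
  assumes T: "\<And>p. p \<in> T \<Longrightarrow> p$3 = \<alpha> * p$1 + \<beta> * p$2 + \<gamma>" and ab: "a^2 + b^2 = 1"
  shows "eucl_embeddable koranyi {p \<in> T. \<bar>- b * (p$1 - 2 * \<beta>) + a * (p$2 + 2 * \<alpha>)\<bar>
      \<le> a * (p$1 - 2 * \<beta>) + b * (p$2 + 2 * \<alpha>)}"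
proof -
  define P where "P x = a * (x$1 - 2 * \<beta>) + b * (x$2 + 2 * \<alpha>)" for x :: "real^3"
  define Q where "Q x = - b * (x$1 - 2 * \<beta>) + a * (x$2 + 2 * \<alpha>)" for x :: "real^3"
  have "eucl_embeddable koranyi {p \<in> T. \<bar>Q p\<bar> \<le> P p}"
  proof (rule eucl_embeddable_pullback[OF sector_embeddable, where \<phi>="\<lambda>p. (P p, Q p)" and c="1/2" and C=2])
    fix p q assume "p \<in> {p \<in> T. \<bar>Q p\<bar> \<le> P p}" "q \<in> {p \<in> T. \<bar>Q p\<bar> \<le> P p}"
    then have "p \<in> T" "q \<in> T"
      by auto
    note coords = nonvertical_plane_coordinates[OF ab T[OF \<open>p \<in> T\<close>] T[OF \<open>q \<in> T\<close>], folded P_def Q_def]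
    have "\<bar>P p * Q q - P q * Q p\<bar> = 2 * \<bar>height_diff p q\<bar>"
      unfolding coords(2)[symmetric] by (simp add: abs_mult)
    then have sd: "sector_dist (P p, Q p) (P q, Q q) = sqrt (horiz_sqdist p q) + sqrt 2 * sqrt \<bar>height_diff p q\<bar>"
      unfolding sector_dist_def coords(1) by (simp add: dist_Pair_Pair dist_real_def real_sqrt_mult)
    have "1 \<le> sqrt 2" "sqrt 2 \<le> 2"
      by (auto simp: real_le_rsqrt intro: real_le_lsqrt)
    then have "1 * sqrt \<bar>height_diff p q\<bar> \<le> sqrt 2 * sqrt \<bar>height_diff p q\<bar>"
      "sqrt 2 * sqrt \<bar>height_diff p q\<bar> \<le> 2 * sqrt \<bar>height_diff p q\<bar>"
      by (intro mult_right_mono; simp)+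
    then show "1 / 2 * koranyi p q \<le> sector_dist (P p, Q p) (P q, Q q)"
      and "sector_dist (P p, Q p) (P q, Q q) \<le> 2 * koranyi p q"
      unfolding sd using koranyi_le_horiz_plus_height[of p q] horiz_plus_height_le_koranyi[of p q]
        real_sqrt_ge_zero[OF horiz_sqdist_nonneg[of p q]] by argo+
  qed (auto simp: koranyi_nonneg)
  then show ?thesis
    unfolding P_def Q_def .
qed

lemma nonvertical_plane_embeddable:
  assumes "\<And>p. p \<in> T \<Longrightarrow> p$3 = \<alpha> * p$1 + \<beta> * p$2 + \<gamma>"
  shows "eucl_embeddable koranyi T"
proof -
  define S where "S a b = {p \<in> T. \<bar>- b * (p$1 - 2 * \<beta>) + a * (p$2 + 2 * \<alpha>)\<bar>
      \<le> a * (p$1 - 2 * \<beta>) + b * (p$2 + 2 * \<alpha>)}" for a b :: real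
  have "T \<subseteq> (S 1 0 \<union> S (-1) 0) \<union> (S 0 1 \<union> S 0 (-1))"
  proof
    fix p assume "p \<in> T"
    define x y where "x = p$1 - 2 * \<beta>" and "y = p$2 + 2 * \<alpha>"
    have mem: "p \<in> S a b \<longleftrightarrow> \<bar>- b * x + a * y\<bar> \<le> a * x + b * y" for a b
      unfolding S_def x_def y_def using \<open>p \<in> T\<close> by simp
    have "\<bar>y\<bar> \<le> x \<or> \<bar>y\<bar> \<le> - x \<or> \<bar>x\<bar> \<le> y \<or> \<bar>x\<bar> \<le> - y"
      by linarith
    then show "p \<in> (S 1 0 \<union> S (-1) 0) \<union> (S 0 1 \<union> S 0 (-1))"
      using mem[of 1 0] mem[of "-1" 0] mem[of 0 1] mem[of 0 "-1"] by auto
  qed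
  moreover have "eucl_embeddable koranyi ((S 1 0 \<union> S (-1) 0) \<union> (S 0 1 \<union> S 0 (-1)))"
    unfolding S_def by (intro koranyi.eucl_embeddable_Un nonvertical_plane_sector_embeddable[OF assms]) auto
  ultimately show ?thesis
    by (rule eucl_embeddable_subset[rotated])
qed

lemma plane_embeddable:
  assumes "n \<noteq> 0" "\<And>p. p \<in> T \<Longrightarrow> n \<bullet> p = k" "bounded T"
  shows "eucl_embeddable koranyi T"
proof -
  have plane: "n$1 * p$1 + n$2 * p$2 + n$3 * p$3 = k" if "p \<in> T" for p
    using assms(2)[OF that] by (simp add: inner_vec_def sum_3)
  show ?thesis
  proof (cases "n$3 = 0")
    case False
    show ?thesis
    proof (rule nonvertical_plane_embeddable)
      fix p assume "p \<in> T"
      then show "p$3 = (- n$1 / n$3) * p$1 + (- n$2 / n$3) * p$2 + k / n$3"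
        using plane[OF \<open>p \<in> T\<close>] False by (simp add: field_simps)
    qed
  next
    case True
    then have nz: "n$1 \<noteq> 0 \<or> n$2 \<noteq> 0"
      using assms(1) by (auto simp: vec_eq_iff forall_3)
    then have "0 < (n$1)^2 + (n$2)^2"
      by (auto simp: add_pos_nonneg add_nonneg_pos)
    define l where "l = sqrt ((n$1)^2 + (n$2)^2)"
    have "0 < l" "l^2 = (n$1)^2 + (n$2)^2"
      unfolding l_def using \<open>0 < (n$1)^2 + (n$2)^2\<close> by auto
    show ?thesis
    proof (rule vertical_plane_embeddable[where c="n$1 / l" and s="n$2 / l" and k="k / l"])
      show "(n$1 / l)^2 + (n$2 / l)^2 = 1"
        using \<open>0 < l\<close> \<open>l^2 = _\<close> nz by (simp add: power_divide flip: add_divide_distrib)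
      show "n$1 / l * p$1 + n$2 / l * p$2 = k / l" if "p \<in> T" for p
        using plane[OF that] True \<open>0 < l\<close> by (simp add: field_simps)
    qed (rule assms(3))
  qed
qed

lemma topological_2_manifold_subset_interior_empty:
  assumes "topological_2_manifold M" "T \<subseteq> M"
  shows "interior T = {}"
proof (rule ccontr)
  assume "interior T \<noteq> {}"
  then obtain x where x: "x \<in> interior T"
    by blast
  then have "x \<in> M"
    using assms(2) interior_subset by blast
  then obtain U and V :: "(real^2) set" where U: "openin (top_of_set M) U" "x \<in> U"
    and "U homeomorphic V"
    using assms(1) unfolding topological_2_manifold_def by blast
  then obtain h g where "homeomorphism U V h g"
    unfolding homeomorphic_def by blast
  then have "continuous_on U h" "inj_on h U"
    unfolding homeomorphism_def by (auto intro: inj_on_inverseI)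
  obtain S where "open S" "U = M \<inter> S"
    using U(1) openin_open by blast
  define W where "W = interior T \<inter> S"
  have "open W" "x \<in> W" "W \<subseteq> U"
    unfolding W_def using \<open>open S\<close> \<open>U = M \<inter> S\<close> x U(2) assms(2) interior_subset by auto
  have "DIM(real^3) \<le> DIM(real^2)"
    by (rule invariance_of_dimension[of W h])
      (use \<open>open W\<close> \<open>x \<in> W\<close> \<open>W \<subseteq> U\<close> \<open>continuous_on U h\<close> \<open>inj_on h U\<close>
        in \<open>auto intro: continuous_on_subset inj_on_subset\<close>)
  then show False
    by simp
qed

theorem theorem1p2:
  fixes M :: "(real^3) set"
  assumes "compact M" and "pl_2_manifold M"
  shows "\<exists>N::nat. \<exists>f :: real^3 \<Rightarrow> (nat \<Rightarrow> real). \<exists>L.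
           bi_lipschitz_on L M koranyi (eucl_dist N) f"
proof -
  obtain \<T> where \<T>: "triangulation \<T>" "\<Union>\<T> = M" and "topological_2_manifold M"
    using assms(2) unfolding pl_2_manifold_def by blast
  have "eucl_embeddable koranyi T" if "T \<in> \<T>" for T
  proof -
    have "T \<subseteq> M"
      using that \<T>(2) by blast
    have "convex T"
      using that \<T>(1) unfolding triangulation_def simplex_def by (auto intro: convex_convex_hull)
    moreover have "interior T = {}"
      using topological_2_manifold_subset_interior_empty \<open>topological_2_manifold M\<close> \<open>T \<subseteq> M\<close> .
    ultimately obtain n k where "n \<noteq> 0" "T \<subseteq> {x. n \<bullet> x = k}"
      by (rule empty_interior_subset_hyperplane)
    moreover have "bounded T"
      using compact_imp_bounded[OF assms(1)] \<open>T \<subseteq> M\<close> bounded_subset by blast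
    ultimately show ?thesis
      by (intro plane_embeddable[where k=k]) auto
  qed
  then have "eucl_embeddable koranyi (\<Union>\<T>)"
    using \<T>(1) unfolding triangulation_def by (intro koranyi.eucl_embeddable_Union) auto
  then show ?thesis
    unfolding \<T>(2) eucl_embeddable_def .
qed

end
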